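(* If $U(x)$ is a polynomial with non-negative coefficients, then the function $V(x)=x(1+xU(x))$ is the covariance of some power series distribution.
   Context: For a power series $\omega(y)=\sum_k a_ky^k$ with non-negative coefficients and positive radius of convergence, the power series distribution (PSD) of $\omega$ with parameter $y>0$ is the law on $\{0,1,2,\dots\}$ given by $P\{\xi=k\}=a_ky^k/\omega(y)$. Its mean is $x(y)=y\omega'(y)/\omega(y)$ and its variance is $y\,x'(y)>0$, so $x(\cdot)$ has an inverse $y=f(x)$ on its range. The covariance of the PSD of $\omega$ is the function $V(x)=f(x)/f'(x)$, i.e. the variance expressed as a function of the mean $x$; a function is "the covariance of a PSD" if it equals this for some such $\omega$. *)

theory Defs
  imports "HOL-Analysis.Analysis" "HOL-Computational_Algebra.Polynomial"
begin

definition psd_omega :: "(nat \<Rightarrow> real) \<Rightarrow> real \<Rightarrow> real" where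
  "psd_omega a y = (\<Sum>k. a k * y ^ k)"

definition psd_mean :: "(nat \<Rightarrow> real) \<Rightarrow> real \<Rightarrow> real" where
  "psd_mean a y = y * deriv (psd_omega a) y / psd_omega a y"

definition psd_var :: "(nat \<Rightarrow> real) \<Rightarrow> real \<Rightarrow> real" where
  "psd_var a y = y * deriv (psd_mean a) y"

text \<open>V is the covariance of a PSD: there is a power series with non-negative
  coefficients and positive radius of convergence such that, for every admissible
  parameter y (0 < y < radius), V evaluated at the mean x(y) equals the variance
  y x'(y) (which is positive, so x has an inverse f and V(x) = f(x)/f'(x)).\<close>
definition is_psd_covariance :: "(real \<Rightarrow> real) \<Rightarrow> bool" where
  "is_psd_covariance V \<longleftrightarrow>
     (\<exists>a. (\<forall>k. a k \<ge> 0) \<and> conv_radius a > 0 \<and>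
        (\<forall>y. 0 < y \<and> ereal y < conv_radius a \<longrightarrow>
            psd_omega a y > 0 \<and> psd_var a y > 0 \<and>
            V (psd_mean a y) = psd_var a y))"

end

theory Submission
  imports Defs
begin

(*
  The requirement y x'(y) = V(x(y)) is the ODE
  y X' = V(X) for the mean as a power series X = \<Sum> c_n y^n with c_0 = 0, c_1 = 1.
  Comparing coefficients gives (n - 1) c_n = [X^2 U(X)]_n, whose right-hand side only involves
  c_1, ..., c_(n-1); hence the c_n exist and are non-negative. The weight is recovered from
  y \<omega>' = X \<omega>, \<omega>(0) = 1, again with non-negative coefficients. The majorant
  c_n \<le> K^(n-1) / n^2 survives the recursion because of the convolution inequality
  \<Sum>_i 1 / (i^2 (n-i)^2) \<le> 8 / n^2, and gives \<omega> a positive radius of convergence.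
  Finally, eliminating X from the two ODEs yields y^2 (\<omega>'' \<omega> - \<omega>'^2) = (y \<omega>')^2 U(X),
  which is exactly y x'(y) = V(x(y)).
*)

lemma fps_cutoff_cutoff [simp]: "fps_cutoff n (fps_cutoff n f) = fps_cutoff n f"
  by (simp add: fps_eq_iff)

lemma fps_cutoff_mult:
  "fps_cutoff n (f * g) = fps_cutoff n (fps_cutoff n f * fps_cutoff n g)"
  by (simp add: fps_eq_iff fps_cutoff_left_mult_nth fps_cutoff_right_mult_nth)

lemma fps_cutoff_poly:
  "fps_cutoff n (poly p f) = fps_cutoff n (poly p (fps_cutoff n f))"
proof (induction p)
  case (pCons a p)
  have "fps_cutoff n (f * poly p f) = fps_cutoff n (fps_cutoff n f * fps_cutoff n (poly p (fps_cutoff n f)))"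
    by (simp add: fps_cutoff_mult[of n f] pCons.IH)
  also have "\<dots> = fps_cutoff n (fps_cutoff n f * poly p (fps_cutoff n f))"
    by (metis fps_cutoff_cutoff fps_cutoff_mult)
  finally show ?case by (simp add: fps_cutoff_add)
qed simp

lemma fps_mult_nth_cutoff:
  fixes f g :: "'a::comm_semiring_1 fps"
  assumes "fps_nth f 0 = 0"
  shows "fps_nth (f * g) n = fps_nth f n * fps_nth g 0 + fps_nth (fps_cutoff n f * fps_cutoff n g) n"
proof -
  have "fps_nth f i * fps_nth g (n - i) = (if i = n then fps_nth f n * fps_nth g 0 else 0)
      + fps_nth (fps_cutoff n f) i * fps_nth (fps_cutoff n g) (n - i)" if "i \<le> n" for i
    using assms that by (cases "i = 0") auto
  then show ?thesis
    unfolding fps_mult_nth by (simp add: sum.distrib)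
qed

definition cov_fps :: "real poly \<Rightarrow> real fps \<Rightarrow> real fps" where
  "cov_fps U f = f + f^2 * poly (map_poly fps_const U) f"

lemma cov_fps_nth:
  assumes "fps_nth f 0 = 0"
  shows "fps_nth (cov_fps U f) n = fps_nth f n + fps_nth (cov_fps U (fps_cutoff n f)) n"
proof -
  define P where "P = poly (map_poly fps_const U)"
  define g where "g = fps_cutoff n f"
  have g0: "fps_nth g 0 = 0" using assms by (simp add: g_def)
  have "fps_cutoff n (f * P f) = fps_cutoff n (g * fps_cutoff n (P g))"
    unfolding fps_cutoff_mult[of n f] g_def P_def by (subst fps_cutoff_poly) (rule refl)
  also have "\<dots> = fps_cutoff n (g * P g)"
    by (metis fps_cutoff_cutoff fps_cutoff_mult g_def)
  finally have cut: "fps_cutoff n (f * P f) = fps_cutoff n (g * P g)" .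
  have "fps_nth (f * (f * P f)) n = fps_nth (g * fps_cutoff n (g * P g)) n"
    using fps_mult_nth_cutoff[OF assms, of "f * P f" n] assms by (simp add: cut flip: g_def)
  also have "\<dots> = fps_nth (g * (g * P g)) n"
    using fps_mult_nth_cutoff[OF g0, of "g * P g" n] fps_mult_nth_cutoff[OF g0, of "fps_cutoff n (g * P g)" n] g0
    by simp
  finally show ?thesis
    by (simp add: cov_fps_def power2_eq_square mult.assoc g_def P_def)
qed

(* Coefficient n of fps_X * X' = V(X) reads n c_n = c_n + [X^2 U(X)]_n, and by cov_fps_nth the
   last term only depends on the c_k with k < n. *)
fun mean_coeff :: "real poly \<Rightarrow> nat \<Rightarrow> real" where
  "mean_coeff U n =
     (if n < 2 then of_bool (n = 1)
      else fps_nth (cov_fps U (Abs_fps (\<lambda>k. if k < n then mean_coeff U k else 0))) n / (real n - 1))"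

declare mean_coeff.simps [simp del]

definition mean_fps :: "real poly \<Rightarrow> real fps" where
  "mean_fps U = Abs_fps (mean_coeff U)"

lemma mean_coeff_eq:
  "mean_coeff U n = (if n < 2 then of_bool (n = 1)
     else fps_nth (cov_fps U (fps_cutoff n (mean_fps U))) n / (real n - 1))"
  unfolding mean_fps_def fps_cutoff_def fps_nth_Abs_fps by (subst mean_coeff.simps) (rule refl)

lemma mean_fps_nth [simp]: "fps_nth (mean_fps U) n = mean_coeff U n"
  by (simp add: mean_fps_def)

lemma mean_coeff_0 [simp]: "mean_coeff U 0 = 0"
  by (simp add: mean_coeff_eq)

lemma mean_fps_ode: "fps_X * fps_deriv (mean_fps U) = cov_fps U (mean_fps U)"
proof (rule fps_ext)
  fix n
  define X where "X = mean_fps U"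
  show "fps_nth (fps_X * fps_deriv X) n = fps_nth (cov_fps U X) n"
  proof (cases "n < 2")
    case True
    then have "fps_cutoff n X = 0" by (auto simp: fps_eq_iff X_def less_2_cases_iff)
    then show ?thesis
      using True cov_fps_nth[of X U n] by (auto simp: X_def cov_fps_def less_2_cases_iff)
  next
    case False
    then have "fps_nth (cov_fps U (fps_cutoff n X)) n = (real n - 1) * fps_nth X n"
      by (simp add: X_def mean_coeff_eq[of U n])
    then show ?thesis
      using cov_fps_nth[of X U n] by (simp add: X_def algebra_simps)
  qed
qed

fun omega_coeff :: "real poly \<Rightarrow> nat \<Rightarrow> real" where
  "omega_coeff U n =
     (if n = 0 then 1 else (\<Sum>k=1..n. mean_coeff U k * omega_coeff U (n - k)) / real n)"

declare omega_coeff.simps [simp del]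

definition omega_fps :: "real poly \<Rightarrow> real fps" where
  "omega_fps U = Abs_fps (omega_coeff U)"

lemma omega_fps_nth [simp]: "fps_nth (omega_fps U) n = omega_coeff U n"
  by (simp add: omega_fps_def)

lemma omega_coeff_0 [simp]: "omega_coeff U 0 = 1"
  by (simp add: omega_coeff.simps)

lemma omega_coeff_Suc:
  "omega_coeff U (Suc n) = (\<Sum>k=1..Suc n. mean_coeff U k * omega_coeff U (Suc n - k)) / real (Suc n)"
  by (subst omega_coeff.simps) simp

lemma omega_coeff_Suc_0 [simp]: "omega_coeff U (Suc 0) = 1"
  using omega_coeff_Suc[of U 0] by (simp add: mean_coeff_eq)

lemma omega_fps_ode: "fps_X * fps_deriv (omega_fps U) = mean_fps U * omega_fps U"
proof (rule fps_ext)
  fix n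
  have sum_eq: "fps_nth (mean_fps U * omega_fps U) n = (\<Sum>k=1..n. mean_coeff U k * omega_coeff U (n - k))"
    unfolding fps_mult_nth sum.atLeast_Suc_atMost[OF le0] by simp
  show "fps_nth (fps_X * fps_deriv (omega_fps U)) n = fps_nth (mean_fps U * omega_fps U) n"
  proof (cases n)
    case (Suc m)
    have "fps_nth (fps_X * fps_deriv (omega_fps U)) n = real n * omega_coeff U n"
      by (simp add: Suc)
    also have "\<dots> = (\<Sum>k=1..n. mean_coeff U k * omega_coeff U (n - k))"
      unfolding Suc omega_coeff_Suc by simp
    finally show ?thesis using sum_eq by simp
  qed (simp add: sum_eq)
qed

lemma poly_map_poly_fps_const:
  "poly (map_poly fps_const p) f = (\<Sum>i\<le>degree p. fps_const (coeff p i) * f ^ i)"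
  by (simp add: poly_altdef coeff_map_poly degree_map_poly)

lemma fps_nth_mult_nonneg:
  fixes f g :: "'a::linordered_semidom fps"
  assumes "\<And>k. 0 \<le> fps_nth f k" "\<And>k. 0 \<le> fps_nth g k"
  shows "0 \<le> fps_nth (f * g) n"
  unfolding fps_mult_nth using assms by (simp add: sum_nonneg)

lemma fps_nth_power_nonneg:
  fixes f :: "'a::linordered_semidom fps"
  assumes "\<And>k. 0 \<le> fps_nth f k"
  shows "0 \<le> fps_nth (f ^ m) n"
proof (induction m arbitrary: n)
  case 0 then show ?case by simp
next
  case (Suc m) then show ?case by (simp add: fps_nth_mult_nonneg assms)
qed

lemma cov_fps_nth_nonneg:
  assumes "\<And>i. 0 \<le> coeff U i" "\<And>k. 0 \<le> fps_nth f k"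
  shows "0 \<le> fps_nth (cov_fps U f) n"
  unfolding cov_fps_def poly_map_poly_fps_const sum_distrib_left
  using assms fps_nth_power_nonneg[of f]
  by (auto intro!: add_nonneg_nonneg sum_nonneg fps_nth_mult_nonneg simp: fps_sum_nth)

lemma sum_inverse_squares_le: "(\<Sum>i\<le>k. inverse (real i ^ 2)) \<le> 2 - inverse (real k)"
proof (induction k)
  case (Suc k)
  show ?case
  proof (cases "k = 0")
    case False
    have "inverse (real (Suc k) ^ 2) \<le> inverse (real k * real (Suc k))"
      using False by (intro le_imp_inverse_le) (auto simp: power2_eq_square)
    also have "\<dots> = inverse (real k) - inverse (real (Suc k))"
      using False by (simp add: field_simps)
    finally have "inverse (real (Suc k) ^ 2) \<le> inverse (real k) - inverse (real (Suc k))" .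
    with Suc.IH show ?thesis by simp
  qed simp
qed simp

lemma inverse_square_convolution_le:
  "(\<Sum>i\<le>k. inverse (real i ^ 2) * inverse (real (k - i) ^ 2)) \<le> 8 * inverse (real k ^ 2)"
proof -
  define \<beta> where "\<beta> j = inverse (real j ^ 2)" for j
  have pointwise: "\<beta> i * \<beta> (k - i) \<le> 2 * \<beta> k * (\<beta> i + \<beta> (k - i))" if "i \<le> k" for i
  proof (cases "i = 0 \<or> i = k")
    case False
    define a b where "a = real i" and "b = real (k - i)"
    have "a > 0" "b > 0" "real k = a + b" using False that by (auto simp: a_def b_def)
    moreover have "(a + b)^2 \<le> 2 * (a^2 + b^2)"
      using sum_squares_ge_zero[of "a - b" 0] by (simp add: power2_eq_square algebra_simps)
    ultimately show ?thesis
      by (simp add: \<beta>_def field_simps flip: a_def b_def)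
  qed (auto simp: \<beta>_def)
  have reflect: "(\<Sum>i\<le>k. \<beta> (k - i)) = (\<Sum>i\<le>k. \<beta> i)"
    by (rule sum.reindex_bij_witness[of _ "\<lambda>i. k - i" "\<lambda>i. k - i"]) auto
  have "(\<Sum>i\<le>k. \<beta> i * \<beta> (k - i)) \<le> (\<Sum>i\<le>k. 2 * \<beta> k * (\<beta> i + \<beta> (k - i)))"
    by (intro sum_mono pointwise) simp
  also have "\<dots> = 2 * \<beta> k * ((\<Sum>i\<le>k. \<beta> i) + (\<Sum>i\<le>k. \<beta> (k - i)))"
    by (simp only: sum_distrib_left[symmetric] sum.distrib)
  also have "\<dots> = 4 * \<beta> k * (\<Sum>i\<le>k. \<beta> i)"
    by (simp add: reflect)
  also have "\<dots> \<le> 4 * \<beta> k * 2"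
  proof (intro mult_left_mono)
    have "0 \<le> inverse (real k)" by simp
    then show "(\<Sum>i\<le>k. \<beta> i) \<le> 2"
      using sum_inverse_squares_le[of k] unfolding \<beta>_def by linarith
  qed (simp add: \<beta>_def)
  finally show ?thesis by (simp add: \<beta>_def)
qed

(* Since inverse 0 = 0, the bound at k = 0 forces fps_nth f 0 = 0. *)
lemma fps_nth_power_le:
  fixes f :: "real fps"
  assumes nonneg: "\<And>k. 0 \<le> fps_nth f k"
    and le: "\<And>k. fps_nth f k \<le> M * r ^ k * inverse (real k ^ 2)"
    and "0 \<le> M" "0 \<le> r"
  shows "fps_nth (f ^ Suc m) n \<le> (8 * M) ^ m * M * r ^ n * inverse (real n ^ 2)"
proof (induction m arbitrary: n)
  case 0 then show ?case using le by simp
next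
  case (Suc m)
  define \<beta> where "\<beta> j = inverse (real j ^ 2)" for j
  have "fps_nth (f ^ Suc (Suc m)) n = (\<Sum>i\<le>n. fps_nth f i * fps_nth (f ^ Suc m) (n - i))"
    by (simp add: fps_mult_nth atLeast0AtMost)
  also have "\<dots> \<le> (\<Sum>i\<le>n. (M * r ^ i * \<beta> i) * ((8 * M) ^ m * M * r ^ (n - i) * \<beta> (n - i)))"
  proof (intro sum_mono mult_mono)
    fix i
    show "fps_nth f i \<le> M * r ^ i * \<beta> i"
      unfolding \<beta>_def by (rule le)
    then show "0 \<le> M * r ^ i * \<beta> i"
      using nonneg order_trans by blast
    show "fps_nth (f ^ Suc m) (n - i) \<le> (8 * M) ^ m * M * r ^ (n - i) * \<beta> (n - i)"
      unfolding \<beta>_def by (rule Suc.IH)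
    show "0 \<le> fps_nth (f ^ Suc m) (n - i)"
      by (rule fps_nth_power_nonneg[OF nonneg])
  qed
  also have "\<dots> = (8 * M) ^ m * M ^ 2 * r ^ n * (\<Sum>i\<le>n. \<beta> i * \<beta> (n - i))"
    unfolding sum_distrib_left
  proof (intro sum.cong refl)
    fix i assume "i \<in> {..n}"
    then have "r ^ i * r ^ (n - i) = r ^ n" by (simp flip: power_add)
    then show "M * r ^ i * \<beta> i * ((8 * M) ^ m * M * r ^ (n - i) * \<beta> (n - i))
        = (8 * M) ^ m * M\<^sup>2 * r ^ n * (\<beta> i * \<beta> (n - i))"
      by (simp add: power2_eq_square mult_ac)
  qed
  also have "\<dots> \<le> (8 * M) ^ m * M ^ 2 * r ^ n * (8 * \<beta> n)"
    using inverse_square_convolution_le[of n] assms(3,4)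
    by (intro mult_left_mono) (auto simp: \<beta>_def)
  also have "\<dots> = (8 * M) ^ Suc m * M * r ^ n * \<beta> n"
    by (simp add: power2_eq_square algebra_simps)
  finally show ?case by (simp add: \<beta>_def)
qed

lemma cov_fps_nth_le:
  assumes "\<And>i. 0 \<le> coeff U i"
    and nonneg: "\<And>k. 0 \<le> fps_nth f k"
    and le: "\<And>k. fps_nth f k \<le> M * r ^ k * inverse (real k ^ 2)"
    and "0 \<le> M" "0 \<le> r"
    and small: "8 * M * (1 + (\<Sum>i\<le>degree U. coeff U i)) \<le> 1"
  shows "fps_nth (cov_fps U f) n \<le> fps_nth f n + M * r ^ n * inverse (real n ^ 2)"
proof -
  define B where "B = M * r ^ n * inverse (real n ^ 2)"
  have "0 \<le> B" using assms(4,5) by (simp add: B_def)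
  have S: "0 \<le> (\<Sum>i\<le>degree U. coeff U i)" using assms(1) by (simp add: sum_nonneg)
  have "0 \<le> 8 * M * (\<Sum>i\<le>degree U. coeff U i)" using S assms(4) by simp
  then have "8 * M \<le> 1" using small by (simp add: algebra_simps)
  have power_le: "fps_nth (f ^ Suc (Suc i)) n \<le> 8 * M * B" for i
  proof -
    have "fps_nth (f ^ Suc (Suc i)) n \<le> (8 * M) ^ Suc i * B"
      using fps_nth_power_le[OF nonneg le assms(4,5), of "Suc i" n] by (simp add: B_def mult.assoc)
    also have "\<dots> = 8 * M * ((8 * M) ^ i * B)" by simp
    also have "\<dots> \<le> 8 * M * B"
      using \<open>0 \<le> B\<close> assms(4) \<open>8 * M \<le> 1\<close> power_le_one[of "8 * M" i]
      by (intro mult_left_mono mult_left_le_one_le) auto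
    finally show ?thesis .
  qed
  then have "fps_nth (f^2 * poly (map_poly fps_const U) f) n \<le> (\<Sum>i\<le>degree U. coeff U i * (8 * M * B))"
    unfolding poly_map_poly_fps_const sum_distrib_left fps_sum_nth
  proof (intro sum_mono)
    fix i
    have "f^2 * (fps_const (coeff U i) * f ^ i) = fps_const (coeff U i) * f ^ Suc (Suc i)"
      by (simp add: power2_eq_square mult_ac)
    then have "fps_nth (f^2 * (fps_const (coeff U i) * f ^ i)) n = coeff U i * fps_nth (f ^ Suc (Suc i)) n"
      by (simp only: fps_mult_left_const_nth)
    also have "\<dots> \<le> coeff U i * (8 * M * B)"
      by (rule mult_left_mono[OF power_le assms(1)])
    finally show "fps_nth (f^2 * (fps_const (coeff U i) * f ^ i)) n \<le> coeff U i * (8 * M * B)" .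
  qed
  also have "\<dots> = 8 * M * (\<Sum>i\<le>degree U. coeff U i) * B"
    by (simp add: sum_distrib_left sum_distrib_right mult_ac)
  also have "\<dots> \<le> B"
    using small S \<open>0 \<le> B\<close> assms(4) by (intro mult_left_le_one_le) (auto simp: algebra_simps)
  finally show ?thesis by (simp add: cov_fps_def B_def)
qed

definition mean_growth :: "real poly \<Rightarrow> real" where
  "mean_growth U = 8 * (1 + (\<Sum>i\<le>degree U. coeff U i))"

lemma mean_growth_ge: "(\<And>i. 0 \<le> coeff U i) \<Longrightarrow> 8 \<le> mean_growth U"
  by (simp add: mean_growth_def sum_nonneg)

lemma mean_coeff_bounds:
  assumes U_nonneg: "\<And>i. 0 \<le> coeff U i"
  shows "0 \<le> mean_coeff U n
    \<and> mean_coeff U n \<le> inverse (mean_growth U) * mean_growth U ^ n * inverse (real n ^ 2)"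
proof (induction n rule: less_induct)
  case (less n)
  define K where "K = mean_growth U"
  have K: "8 \<le> K" using mean_growth_ge[OF U_nonneg] by (simp add: K_def)
  show ?case
  proof (cases "n < 2")
    case True
    then consider "n = 0" | "n = 1" by linarith
    then show ?thesis using K by cases (simp_all add: mean_coeff_eq K_def)
  next
    case False
    define g where "g = fps_cutoff n (mean_fps U)"
    have g_nonneg: "0 \<le> fps_nth g k" for k
      using less.IH by (simp add: g_def)
    have g_le: "fps_nth g k \<le> inverse K * K ^ k * inverse (real k ^ 2)" for k
      using less.IH K by (simp add: g_def K_def)
    have "fps_nth (cov_fps U g) n \<le> fps_nth g n + inverse K * K ^ n * inverse (real n ^ 2)"
    proof (rule cov_fps_nth_le[OF U_nonneg g_nonneg g_le])
      show "8 * inverse K * (1 + (\<Sum>i\<le>degree U. coeff U i)) \<le> 1"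
        using K by (simp add: K_def mean_growth_def field_simps)
    qed (use K in auto)
    moreover have "fps_nth g n = 0" by (simp add: g_def)
    moreover have "0 \<le> fps_nth (cov_fps U g) n"
      by (rule cov_fps_nth_nonneg[OF U_nonneg g_nonneg])
    moreover have "mean_coeff U n = fps_nth (cov_fps U g) n / (real n - 1)"
      using False by (simp add: mean_coeff_eq g_def)
    moreover have "1 \<le> real n - 1" using False by simp
    ultimately show ?thesis
      by (simp add: K_def divide_le_eq order_trans[OF _ mult_le_cancel_left1[THEN iffD2]])
  qed
qed

lemma mean_coeff_le_power:
  assumes U_nonneg: "\<And>i. 0 \<le> coeff U i"
  shows "mean_coeff U n \<le> mean_growth U ^ n"
proof -
  define K where "K = mean_growth U"
  have K: "8 \<le> K" using mean_growth_ge[OF U_nonneg] by (simp add: K_def)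
  have "inverse (real n ^ 2) \<le> 1"
    by (cases n) (simp_all add: inverse_le_1_iff)
  then have "inverse K * inverse (real n ^ 2) \<le> 1"
    using K by (intro mult_le_one) (auto simp: inverse_le_1_iff)
  then have "inverse K * K ^ n * inverse (real n ^ 2) \<le> K ^ n"
    using K mult_right_mono[of _ 1 "K ^ n"] by (simp add: mult_ac)
  then show ?thesis
    using mean_coeff_bounds[OF U_nonneg, of n] by (simp add: K_def)
qed

lemma omega_coeff_bounds:
  assumes U_nonneg: "\<And>i. 0 \<le> coeff U i"
  shows "0 \<le> omega_coeff U n \<and> omega_coeff U n \<le> mean_growth U ^ n"
proof (induction n rule: less_induct)
  case (less n)
  define K where "K = mean_growth U"
  have K: "8 \<le> K" using mean_growth_ge[OF U_nonneg] by (simp add: K_def)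
  show ?case
  proof (cases n)
    case (Suc m)
    have c: "0 \<le> mean_coeff U k" "mean_coeff U k \<le> K ^ k" for k
      using mean_coeff_bounds[OF U_nonneg] mean_coeff_le_power[OF U_nonneg] by (auto simp: K_def)
    have "0 \<le> (\<Sum>k=1..n. mean_coeff U k * omega_coeff U (n - k))"
      using less.IH c Suc by (intro sum_nonneg mult_nonneg_nonneg) auto
    moreover have "(\<Sum>k=1..n. mean_coeff U k * omega_coeff U (n - k)) \<le> (\<Sum>k=1..n. K ^ k * K ^ (n - k))"
      using less.IH c Suc K by (intro sum_mono mult_mono) (auto simp: K_def)
    moreover have "(\<Sum>k=1..n. K ^ k * K ^ (n - k)) = real n * K ^ n"
      by (simp flip: power_add)
    ultimately show ?thesis
      using Suc omega_coeff_Suc[of U m] by (simp add: K_def divide_le_eq mult.commute)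
  qed simp
qed

lemma conv_radius_pos_of_le_power:
  fixes a :: "nat \<Rightarrow> real"
  assumes "\<And>n. norm (a n) \<le> K ^ n" "0 < K"
  shows "0 < conv_radius a"
proof -
  define z where "z = inverse (2 * K)"
  have "summable (\<lambda>n. a n * z ^ n)"
  proof (rule summable_comparison_test')
    show "summable (\<lambda>n. (1/2::real) ^ n)" by (rule summable_geometric) simp
    fix n
    have "norm (a n * z ^ n) \<le> K ^ n * z ^ n"
      using assms by (simp add: z_def abs_mult mult_right_mono)
    also have "\<dots> = (1/2) ^ n"
      using assms(2) by (simp add: z_def flip: power_mult_distrib)
    finally show "norm (a n * z ^ n) \<le> (1/2) ^ n" .
  qed
  then have "ereal (norm z) \<le> conv_radius a" by (rule conv_radius_geI)
  moreover have "0 < z" using assms(2) by (simp add: z_def)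
  ultimately show ?thesis by (simp add: less_le_trans[of 0 "ereal z"])
qed

lemma omega_fps_conv_radius_pos:
  assumes "\<And>i. 0 \<le> coeff U i"
  shows "0 < fps_conv_radius (omega_fps U)"
  unfolding fps_conv_radius_def
  by (rule conv_radius_pos_of_le_power[where K = "mean_growth U"])
     (use omega_coeff_bounds[OF assms] mean_growth_ge[OF assms] in auto)

lemma fps_variance_identity:
  fixes X W G :: "'a::comm_ring_1 fps"
  assumes X_ode: "fps_X * fps_deriv X = X + X^2 * G"
    and W_ode: "fps_X * fps_deriv W = X * W"
  shows "fps_X^2 * (fps_deriv (fps_deriv W) * W - fps_deriv W ^ 2) = (fps_X * fps_deriv W)^2 * G"
proof -
  have "fps_deriv W + fps_X * fps_deriv (fps_deriv W) = fps_deriv X * W + X * fps_deriv W"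
    using arg_cong[OF W_ode, of fps_deriv] by (simp add: algebra_simps)
  then have "fps_X * fps_deriv W + fps_X^2 * fps_deriv (fps_deriv W)
      = (fps_X * fps_deriv X) * W + X * (fps_X * fps_deriv W)"
    by (metis (no_types, lifting) distrib_left mult.assoc mult.left_commute power2_eq_square)
  then have W2: "fps_X^2 * fps_deriv (fps_deriv W) = (X + X^2 * G) * W + X * (X * W) - X * W"
    unfolding X_ode W_ode by (simp add: algebra_simps)
  have "fps_X^2 * (fps_deriv (fps_deriv W) * W - fps_deriv W ^ 2)
      = (fps_X^2 * fps_deriv (fps_deriv W)) * W - (fps_X * fps_deriv W)^2"
    by (simp add: algebra_simps power2_eq_square)
  also have "\<dots> = (X * W)^2 * G"
    unfolding W2 W_ode by (simp add: algebra_simps power2_eq_square)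
  finally show ?thesis unfolding W_ode .
qed

lemma poly_homogenize:
  fixes p :: "'a::comm_semiring_1 poly"
  assumes "b * x = a"
  shows "b ^ degree p * poly p x = (\<Sum>i\<le>degree p. coeff p i * a ^ i * b ^ (degree p - i))"
  unfolding poly_altdef sum_distrib_left
proof (intro sum.cong refl)
  fix i assume "i \<in> {..degree p}"
  then have "b ^ degree p = b ^ i * b ^ (degree p - i)" by (simp flip: power_add)
  then show "b ^ degree p * (coeff p i * x ^ i) = coeff p i * a ^ i * b ^ (degree p - i)"
    by (simp add: assms[symmetric] power_mult_distrib mult_ac)
qed

lemma fps_conv_radius_gt_mult:
  "r < fps_conv_radius f \<Longrightarrow> r < fps_conv_radius g \<Longrightarrow> r < fps_conv_radius (f * g)"
  by (rule less_le_trans[OF _ fps_conv_radius_mult]) simp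

lemma fps_conv_radius_gt_diff:
  "r < fps_conv_radius f \<Longrightarrow> r < fps_conv_radius g \<Longrightarrow> r < fps_conv_radius (f - g)"
  by (rule less_le_trans[OF _ fps_conv_radius_diff]) simp

lemma fps_conv_radius_gt_power:
  "r < fps_conv_radius f \<Longrightarrow> r < fps_conv_radius (f ^ n)"
  by (rule less_le_trans[OF _ fps_conv_radius_power])

lemma fps_conv_radius_gt_deriv:
  fixes f :: "'a::{banach, real_normed_field} fps"
  shows "r < fps_conv_radius f \<Longrightarrow> r < fps_conv_radius (fps_deriv f)"
  by (rule less_le_trans[OF _ fps_conv_radius_deriv])

lemma eval_fps_sum:
  fixes F :: "'i \<Rightarrow> 'a::{banach, real_normed_div_algebra} fps"
  assumes "finite I" "\<And>i. i \<in> I \<Longrightarrow> ereal (norm z) < fps_conv_radius (F i)"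
  shows "ereal (norm z) < fps_conv_radius (\<Sum>i\<in>I. F i)
    \<and> eval_fps (\<Sum>i\<in>I. F i) z = (\<Sum>i\<in>I. eval_fps (F i) z)"
  using assms
proof (induction I rule: finite_induct)
  case (insert i I)
  then show ?case
    using less_le_trans[OF _ fps_conv_radius_add[of "F i" "sum F I"]] by (auto simp: eval_fps_add)
qed simp

lemma psd_omega_eq_eval_fps: "psd_omega a = eval_fps (Abs_fps a)"
  by (simp add: fun_eq_iff psd_omega_def eval_fps_def)

lemma deriv_eval_fps:
  fixes f :: "'a::{banach, real_normed_field} fps"
  assumes "ereal (norm z) < fps_conv_radius f"
  shows "deriv (eval_fps f) z = eval_fps (fps_deriv f) z"
  by (rule DERIV_imp_deriv[OF has_field_derivative_eval_fps[OF assms]])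

lemma psd_mean_eq_eval_fps:
  assumes "ereal \<bar>y\<bar> < conv_radius a"
  shows "psd_mean a y = y * eval_fps (fps_deriv (Abs_fps a)) y / eval_fps (Abs_fps a) y"
  using deriv_eval_fps[of y "Abs_fps a"] assms
  by (simp add: psd_mean_def psd_omega_eq_eval_fps fps_conv_radius_def)

lemma psd_var_eq_eval_fps:
  fixes a :: "nat \<Rightarrow> real"
  defines "W \<equiv> Abs_fps a"
  assumes y: "ereal \<bar>y\<bar> < conv_radius a" and nonzero: "eval_fps W y \<noteq> 0"
  shows "psd_var a y = psd_mean a y + y^2 *
    (eval_fps (fps_deriv (fps_deriv W)) y * eval_fps W y - eval_fps (fps_deriv W) y ^ 2) / eval_fps W y ^ 2"
proof -
  define f f1 f2 where "f = eval_fps W y" and "f1 = eval_fps (fps_deriv W) y"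
    and "f2 = eval_fps (fps_deriv (fps_deriv W)) y"
  have yW: "ereal \<bar>y\<bar> < fps_conv_radius W" using y by (simp add: W_def fps_conv_radius_def)
  have d0: "(eval_fps W has_field_derivative f1) (at y)"
    unfolding f1_def using yW by (intro has_field_derivative_eval_fps) simp
  have d1: "(eval_fps (fps_deriv W) has_field_derivative f2) (at y)"
    unfolding f2_def using fps_conv_radius_gt_deriv[OF yW] by (intro has_field_derivative_eval_fps) simp
  have "((\<lambda>z. z * eval_fps (fps_deriv W) z / eval_fps W z) has_field_derivative
      ((f1 + y * f2) * f - y * f1 * f1) / (f * f)) (at y)"
    using DERIV_divide[OF DERIV_mult[OF DERIV_ident d1] d0] nonzero
    by (simp add: f_def f1_def algebra_simps)
  then have "(psd_mean a has_field_derivative ((f1 + y * f2) * f - y * f1 * f1) / (f * f)) (at y)"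
  proof (rule has_field_derivative_transform_within_open[OF _ open_eball])
    show "y \<in> eball 0 (conv_radius a)" using y by simp
    show "z * eval_fps (fps_deriv W) z / eval_fps W z = psd_mean a z" if "z \<in> eball 0 (conv_radius a)" for z
      using that psd_mean_eq_eval_fps[of z a] by (simp add: W_def)
  qed
  then have "psd_var a y = y * (((f1 + y * f2) * f - y * f1 * f1) / (f * f))"
    unfolding psd_var_def by (simp add: DERIV_imp_deriv)
  also have "\<dots> = y * f1 / f + y^2 * (f2 * f - f1^2) / f^2"
    using nonzero by (simp add: f_def field_simps power2_eq_square)
  finally show ?thesis
    using psd_mean_eq_eval_fps[OF y] by (simp add: f_def f1_def f2_def W_def)
qed

lemma eval_fps_pos:
  fixes F :: "real fps"
  assumes "\<And>n. 0 \<le> fps_nth F n" "0 < fps_nth F 0" "0 \<le> y" "ereal y < fps_conv_radius F"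
  shows "0 < eval_fps F y"
  unfolding eval_fps_def
  by (rule suminf_pos2[where i = 0]) (use assms summable_fps[of y F] in auto)

(* Multiplying by W^(degree U) turns U(X), with X = fps_X W' / W, into a polynomial in fps_X W'
   and W; X itself need not converge on the whole disc of convergence of W. *)
lemma omega_fps_variance_identity:
  fixes U :: "real poly"
  defines "W \<equiv> omega_fps U" and "Z \<equiv> fps_X * fps_deriv (omega_fps U)"
  shows "fps_X^2 * (fps_deriv (fps_deriv W) * W - fps_deriv W ^ 2) * W ^ degree U
    = Z^2 * (\<Sum>i\<le>degree U. fps_const (coeff U i) * Z ^ i * W ^ (degree U - i))"
proof -
  define P where "P = map_poly fps_const U"
  have P: "degree P = degree U" "coeff P i = fps_const (coeff U i)" for i
    by (simp_all add: P_def degree_map_poly coeff_map_poly)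
  have "fps_X * fps_deriv (mean_fps U) = mean_fps U + mean_fps U ^ 2 * poly P (mean_fps U)"
    using mean_fps_ode[of U] by (simp add: cov_fps_def P_def)
  from fps_variance_identity[OF this omega_fps_ode]
  have "fps_X^2 * (fps_deriv (fps_deriv W) * W - fps_deriv W ^ 2) * W ^ degree U
      = Z^2 * (W ^ degree P * poly P (mean_fps U))"
    by (simp add: W_def Z_def P mult_ac)
  also have "W ^ degree P * poly P (mean_fps U)
      = (\<Sum>i\<le>degree U. fps_const (coeff U i) * Z ^ i * W ^ (degree U - i))"
    using poly_homogenize[of W "mean_fps U" Z P] omega_fps_ode[of U]
    by (simp add: W_def Z_def P mult.commute)
  finally show ?thesis .
qed

lemma omega_eval_identity:
  fixes U :: "real poly"
  defines "W \<equiv> omega_fps U"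
  assumes y: "ereal \<bar>y\<bar> < fps_conv_radius W"
  shows "y^2 * (eval_fps (fps_deriv (fps_deriv W)) y * eval_fps W y - eval_fps (fps_deriv W) y ^ 2)
      * eval_fps W y ^ degree U
    = (y * eval_fps (fps_deriv W) y)^2 * (\<Sum>i\<le>degree U. coeff U i
      * (y * eval_fps (fps_deriv W) y) ^ i * eval_fps W y ^ (degree U - i))"
proof -
  have W1: "ereal \<bar>y\<bar> < fps_conv_radius (fps_deriv W)"
    and W2: "ereal \<bar>y\<bar> < fps_conv_radius (fps_deriv (fps_deriv W))"
    using y by (simp_all add: fps_conv_radius_gt_deriv)
  note radius = y W1 W2 fps_conv_radius_gt_mult fps_conv_radius_gt_diff fps_conv_radius_gt_power
  have "ereal \<bar>y\<bar> < fps_conv_radius (fps_const (coeff U i)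
      * (fps_X * fps_deriv W) ^ i * W ^ (degree U - i))" for i
    by (simp add: radius)
  then have sum: "ereal \<bar>y\<bar> < fps_conv_radius (\<Sum>i\<le>degree U. fps_const (coeff U i)
      * (fps_X * fps_deriv W) ^ i * W ^ (degree U - i))
    \<and> eval_fps (\<Sum>i\<le>degree U. fps_const (coeff U i) * (fps_X * fps_deriv W) ^ i * W ^ (degree U - i)) y
      = (\<Sum>i\<le>degree U. eval_fps (fps_const (coeff U i) * (fps_X * fps_deriv W) ^ i * W ^ (degree U - i)) y)"
    using eval_fps_sum[of "{..degree U}" y "\<lambda>i. fps_const (coeff U i) * (fps_X * fps_deriv W) ^ i * W ^ (degree U - i)"]
    by simp
  show ?thesis
    using arg_cong[OF omega_fps_variance_identity[of U], of "\<lambda>F. eval_fps F y"] sum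
    by (simp add: W_def[symmetric] radius eval_fps_mult eval_fps_diff eval_fps_power)
qed

lemma omega_eval_pos:
  assumes U_nonneg: "\<And>i. 0 \<le> coeff U i"
    and y: "0 \<le> y" "ereal y < fps_conv_radius (omega_fps U)"
  shows "0 < eval_fps (omega_fps U) y" "0 < eval_fps (fps_deriv (omega_fps U)) y"
proof -
  have nonneg: "0 \<le> omega_coeff U n" for n using omega_coeff_bounds[OF U_nonneg] by blast
  show "0 < eval_fps (omega_fps U) y"
    by (rule eval_fps_pos) (use y nonneg in auto)
  show "0 < eval_fps (fps_deriv (omega_fps U)) y"
    by (rule eval_fps_pos) (use y nonneg fps_conv_radius_gt_deriv[of y "omega_fps U"] in auto)
qed

lemma psd_var_omega_coeff:
  fixes U :: "real poly"
  defines "a \<equiv> omega_coeff U"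
  assumes U_nonneg: "\<And>i. 0 \<le> coeff U i" and y: "0 < y" "ereal y < conv_radius a"
  shows "psd_var a y = psd_mean a y * (1 + psd_mean a y * poly U (psd_mean a y))"
proof -
  define W where "W = omega_fps U"
  define f f1 f2 where "f = eval_fps W y" and "f1 = eval_fps (fps_deriv W) y"
    and "f2 = eval_fps (fps_deriv (fps_deriv W)) y"
  define x where "x = psd_mean a y"
  have yW: "ereal \<bar>y\<bar> < fps_conv_radius W"
    using y by (simp add: W_def a_def omega_fps_def fps_conv_radius_def)
  have f: "0 < f" using omega_eval_pos[OF U_nonneg] y yW by (simp add: f_def W_def)
  have x: "x = y * f1 / f"
    using psd_mean_eq_eval_fps[of y a] y by (simp add: x_def f_def f1_def W_def a_def omega_fps_def)
  have "y^2 * (f2 * f - f1^2) * f ^ degree U = (y * f1)^2 * (f ^ degree U * poly U x)"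
    using omega_eval_identity[OF yW[unfolded W_def]] poly_homogenize[of f x "y * f1" U] f
    by (simp add: x f_def f1_def f2_def W_def)
  then have key: "y^2 * (f2 * f - f1^2) = (y * f1)^2 * poly U x"
    using f by (simp add: mult_ac)
  have "psd_var a y = x + y^2 * (f2 * f - f1^2) / f^2"
    using psd_var_eq_eval_fps[of y a] y f
    by (simp add: x_def f_def f1_def f2_def W_def a_def omega_fps_def)
  also have "\<dots> = x * (1 + x * poly U x)"
    unfolding key x using f by (simp add: field_simps power2_eq_square)
  finally show ?thesis by (simp add: x_def)
qed

theorem corollary2:
  fixes U :: "real poly"
  assumes "\<forall>i. coeff U i \<ge> 0"
  shows "is_psd_covariance (\<lambda>x. x * (1 + x * poly U x))"
  unfolding is_psd_covariance_def
proof (intro exI[of _ "omega_coeff U"] conjI allI impI)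
  have U_nonneg: "0 \<le> coeff U i" for i using assms by blast
  show "0 \<le> omega_coeff U k" for k using omega_coeff_bounds[OF U_nonneg] by blast
  show "0 < conv_radius (omega_coeff U)"
    using omega_fps_conv_radius_pos[OF U_nonneg] by (simp add: omega_fps_def fps_conv_radius_def)
  fix y assume y: "0 < y \<and> ereal y < conv_radius (omega_coeff U)"
  define x where "x = psd_mean (omega_coeff U) y"
  have yW: "ereal y < fps_conv_radius (omega_fps U)"
    using y by (simp add: omega_fps_def fps_conv_radius_def)
  note pos = omega_eval_pos[OF U_nonneg _ yW]
  show "0 < psd_omega (omega_coeff U) y"
    using pos y by (simp add: psd_omega_eq_eval_fps flip: omega_fps_def)
  have "0 < x"
    using pos y psd_mean_eq_eval_fps[of y "omega_coeff U"] by (simp add: x_def flip: omega_fps_def)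
  moreover have "0 \<le> poly U x"
    using \<open>0 < x\<close> U_nonneg by (simp add: poly_altdef sum_nonneg)
  moreover have var: "psd_var (omega_coeff U) y = x * (1 + x * poly U x)"
    using psd_var_omega_coeff[OF U_nonneg] y by (simp add: x_def)
  ultimately show "0 < psd_var (omega_coeff U) y" by (simp add: add_pos_nonneg)
  show "(\<lambda>x. x * (1 + x * poly U x)) (psd_mean (omega_coeff U) y) = psd_var (omega_coeff U) y"
    by (simp add: var x_def)
qed

end
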